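(* Let $(G,d)$ be a boundedly compact $p$-uniformly convex metric space with $p>1$ and $c>0$, $f:G\to\mathbb{R}$ proper, convex and lower semicontinuous, $\lambda>0$. Then: (i) $\operatorname{argmin}f\subset\mathrm{Fix}\,\mathrm{prox}^p_{f,\lambda}$; (ii) for all $x,y\in G$, with $x_+=\mathrm{prox}^p_{f,\lambda}(x)$, $y_+=\mathrm{prox}^p_{f,\lambda}(y)$: $\Delta^{(p,c)}(x,y,x_+,y_+)\ge\frac{c^2}{4}d(x_+,y_+)^p$; (iii) if $c\in(3/2,2]$, then for all $x,y\in G$, $$d(x_+,y_+)^p\le(1+\epsilon_c)d(x,y)^p-\frac{1-\alpha_c}{\alpha_c}\psi^{(p,c)}(x,y,x_+,y_+),\quad\alpha_c=\frac{c(c-1)}{2+c(c-1)},\ \epsilon_c=\frac{2-c}{c-1},$$ i.e. $\mathrm{prox}^p_{f,\lambda}$ is a$\alpha$-fne on $G$ with constant $\alpha_c$ and violation $\epsilon_c$.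
   Context: $(G,d)$ uniquely geodesic; $(1-\tau)x\oplus\tau y$ is the point on the geodesic from $x$ to $y$ at distance $\tau d(x,y)$ from $x$. $p$-uniform convexity with constant $c$: $d(z,(1-\tau)x\oplus\tau y)^p\le(1-\tau)d(z,x)^p+\tau d(z,y)^p-\frac c2\tau(1-\tau)d(x,y)^p$. $f$ convex: $f((1-\tau)x\oplus\tau y)\le(1-\tau)f(x)+\tau f(y)$. $\mathrm{prox}^p_{f,\lambda}(x)=\operatorname{argmin}_{y\in G}\{f(y)+\frac1{p\lambda^{p-1}}d(y,x)^p\}$ (single-valued here). $\Delta^{(p,c)}(x,y,u,v)=\frac c4\big(d(x,v)^p+d(y,u)^p-d(x,u)^p-d(y,v)^p\big)$; $\psi^{(p,c)}(x,y,u,v)=\frac c2\big(d(x,u)^p+d(y,v)^p+d(u,v)^p+d(x,y)^p-d(y,u)^p-d(x,v)^p\big)$. A mapping $T$ is a$\alpha$-fne on $G$ with constant $\alpha\in(0,1)$ and violation $\epsilon\ge0$ if $d(Tx,Ty)^p\le(1+\epsilon)d(x,y)^p-\frac{1-\alpha}{\alpha}\psi^{(p,c)}(x,y,Tx,Ty)$ for all $x,y\in G$. *)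

theory Defs
  imports "HOL-Analysis.Analysis"
begin

definition geodesic_path :: "(real \<Rightarrow> 'a::metric_space) \<Rightarrow> 'a \<Rightarrow> 'a \<Rightarrow> bool" where
  "geodesic_path \<gamma> x y \<longleftrightarrow> \<gamma> 0 = x \<and> \<gamma> 1 = y \<and>
     (\<forall>s\<in>{0..1}. \<forall>t\<in>{0..1}. dist (\<gamma> s) (\<gamma> t) = \<bar>s - t\<bar> * dist x y)"

definition uniquely_geodesic :: "'a::metric_space itself \<Rightarrow> bool" where
  "uniquely_geodesic _ \<longleftrightarrow> (\<forall>x y::'a. (\<exists>\<gamma>. geodesic_path \<gamma> x y) \<and>
     (\<forall>\<gamma> \<gamma>'. geodesic_path \<gamma> x y \<longrightarrow> geodesic_path \<gamma>' x y \<longrightarrow> (\<forall>t\<in>{0..1}. \<gamma> t = \<gamma>' t)))"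

definition geod :: "'a::metric_space \<Rightarrow> 'a \<Rightarrow> real \<Rightarrow> 'a" where
  "geod x y \<tau> = (THE z. \<exists>\<gamma>. geodesic_path \<gamma> x y \<and> \<gamma> \<tau> = z)"

definition boundedly_compact :: "'a::metric_space itself \<Rightarrow> bool" where
  "boundedly_compact _ \<longleftrightarrow> (\<forall>S::'a set. bounded S \<and> closed S \<longrightarrow> compact S)"

definition p_uniformly_convex :: "'a::metric_space itself \<Rightarrow> real \<Rightarrow> real \<Rightarrow> bool" where
  "p_uniformly_convex _ p c \<longleftrightarrow> uniquely_geodesic TYPE('a) \<and>
     (\<forall>x y z::'a. \<forall>\<tau>\<in>{0..1}.
        dist z (geod x y \<tau>) powr p \<le> (1 - \<tau>) * dist z x powr p + \<tau> * dist z y powr p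
          - c / 2 * \<tau> * (1 - \<tau>) * dist x y powr p)"

definition geod_convex :: "('a::metric_space \<Rightarrow> real) \<Rightarrow> bool" where
  "geod_convex f \<longleftrightarrow> (\<forall>x y. \<forall>\<tau>\<in>{0..1}. f (geod x y \<tau>) \<le> (1 - \<tau>) * f x + \<tau> * f y)"

definition lsc :: "('a::topological_space \<Rightarrow> real) \<Rightarrow> bool" where
  "lsc f \<longleftrightarrow> (\<forall>x t. t < f x \<longrightarrow> (\<forall>\<^sub>F z in nhds x. t < f z))"

definition argmin_set :: "('a \<Rightarrow> real) \<Rightarrow> 'a set" where
  "argmin_set f = {x. \<forall>y. f x \<le> f y}"

definition prox :: "real \<Rightarrow> ('a::metric_space \<Rightarrow> real) \<Rightarrow> real \<Rightarrow> 'a \<Rightarrow> 'a" where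
  "prox p f lam x = (SOME y. \<forall>z. f y + 1 / (p * lam powr (p - 1)) * dist y x powr p
                              \<le> f z + 1 / (p * lam powr (p - 1)) * dist z x powr p)"

definition Delta :: "real \<Rightarrow> real \<Rightarrow> 'a::metric_space \<Rightarrow> 'a \<Rightarrow> 'a \<Rightarrow> 'a \<Rightarrow> real" where
  "Delta p c x y u v = c / 4 * (dist x v powr p + dist y u powr p - dist x u powr p - dist y v powr p)"

definition Psi :: "real \<Rightarrow> real \<Rightarrow> 'a::metric_space \<Rightarrow> 'a \<Rightarrow> 'a \<Rightarrow> 'a \<Rightarrow> real" where
  "Psi p c x y u v = c / 2 * (dist x u powr p + dist y v powr p + dist u v powr p + dist x y powr p
                              - dist y u powr p - dist x v powr p)"

definition a_fne :: "real \<Rightarrow> real \<Rightarrow> ('a::metric_space \<Rightarrow> 'a) \<Rightarrow> real \<Rightarrow> real \<Rightarrow> bool" where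
  "a_fne p c T \<alpha> \<epsilon> \<longleftrightarrow> 0 < \<alpha> \<and> \<alpha> < 1 \<and> 0 \<le> \<epsilon> \<and>
     (\<forall>x y. dist (T x) (T y) powr p \<le> (1 + \<epsilon>) * dist x y powr p - (1 - \<alpha>) / \<alpha> * Psi p c x y (T x) (T y))"

end

theory Submission
  imports Defs "HOL-Real_Asymp.Real_Asymp"
begin

(* Let k = 1 / (p lam^(p-1)).  Convexity of f and p-uniform convexity of d(x,.)^p make the
   proximal objective f + k d(x,.)^p uniformly convex along geodesics; comparing its minimiser
   u = prox x with the points of the geodesic from u to any v, and letting them tend to u, gives
     f u + k d(x,u)^p + k c/2 d(u,v)^p <= f v + k d(x,v)^p.
   Adding this for (x, prox x, prox y) and (y, prox y, prox x), the values of f cancel and what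
   remains is (ii).  Part (iii) is an algebraic rearrangement of (ii) that holds for every c in
   (1,2].
   The minimiser exists (so the SOME in prox is meaningful) because the space is boundedly
   compact, f is lower semicontinuous and the objective is coercive: f is bounded below by
   f x - L (1 + d(x,.)) by convexity, and p > 1. *)

lemma lsc_open_superlevel:
  assumes "lsc f"
  shows "open {z. t < f z}"
  unfolding open_subopen[of "{z. t < f z}"]
  using assms unfolding lsc_def eventually_nhds by (metis mem_Collect_eq subsetI)

lemma lsc_attains_min:
  fixes f :: "'a::topological_space \<Rightarrow> real"
  assumes "lsc f" "compact S" "S \<noteq> {}"
  shows "\<exists>x\<in>S. \<forall>y\<in>S. f x \<le> f y"
proof (rule ccontr)
  assume "\<not> ?thesis"
  then have "S \<subseteq> (\<Union>y\<in>S. {z. f y < f z})"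
    by (auto simp: not_le)
  then obtain T where T: "T \<subseteq> S" "finite T" "S \<subseteq> (\<Union>y\<in>T. {z. f y < f z})"
    using compactE_image[OF assms(2)] lsc_open_superlevel[OF assms(1)] by metis
  then have "T \<noteq> {}" using assms(3) by blast
  then obtain y where "y \<in> T" "\<forall>w\<in>T. \<not> f w < f y"
    using ex_is_arg_min_if_finite[OF \<open>finite T\<close>, of f] unfolding is_arg_min_def by blast
  with T show False by blast
qed

lemma lsc_add_continuous:
  assumes "lsc f" "continuous_on UNIV g"
  shows "lsc (\<lambda>z. f z + g z)"
  unfolding lsc_def
proof (intro allI impI)
  fix x t assume "t < f x + g x"
  define \<delta> where "\<delta> = (f x + g x - t) / 2"
  have "\<delta> > 0" using \<open>t < f x + g x\<close> by (simp add: \<delta>_def)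
  have "(g \<longlongrightarrow> g x) (nhds x)"
    using assms(2) by (simp add: continuous_on_def tendsto_at_iff_tendsto_nhds[symmetric])
  then have "\<forall>\<^sub>F z in nhds x. g x - \<delta> < g z"
    using \<open>\<delta> > 0\<close> by (simp add: order_tendstoD(1))
  moreover have "\<forall>\<^sub>F z in nhds x. f x - \<delta> < f z"
    using assms(1) \<open>\<delta> > 0\<close> unfolding lsc_def by simp
  ultimately show "\<forall>\<^sub>F z in nhds x. t < f z + g z"
    by eventually_elim (simp add: \<delta>_def field_simps)
qed

lemma geod_eq_geodesic_path:
  fixes x y :: "'a::metric_space"
  assumes "uniquely_geodesic TYPE('a)" "geodesic_path \<gamma> x y" "t \<in> {0..1}"
  shows "geod x y t = \<gamma> t"
  unfolding geod_def
proof (rule the_equality)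
  show "\<exists>\<gamma>'. geodesic_path \<gamma>' x y \<and> \<gamma>' t = \<gamma> t"
    using assms(2) by blast
next
  fix z assume "\<exists>\<gamma>'. geodesic_path \<gamma>' x y \<and> \<gamma>' t = z"
  then show "z = \<gamma> t"
    using assms unfolding uniquely_geodesic_def by blast
qed

lemma dist_geod_left:
  fixes x y :: "'a::metric_space"
  assumes "uniquely_geodesic TYPE('a)" "t \<in> {0..1}"
  shows "dist x (geod x y t) = t * dist x y"
proof -
  obtain \<gamma> where \<gamma>: "geodesic_path \<gamma> x y"
    using assms(1) unfolding uniquely_geodesic_def by blast
  then have "\<gamma> 0 = x" and iso: "\<forall>s\<in>{0..1}. \<forall>t\<in>{0..1}. dist (\<gamma> s) (\<gamma> t) = \<bar>s - t\<bar> * dist x y"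
    unfolding geodesic_path_def by simp_all
  have "dist (\<gamma> 0) (\<gamma> t) = \<bar>0 - t\<bar> * dist x y"
    using bspec[OF bspec[OF iso, of 0] assms(2)] by simp
  then show ?thesis
    using \<open>\<gamma> 0 = x\<close> geod_eq_geodesic_path[OF assms(1) \<gamma> assms(2)] assms(2) by simp
qed

lemma geod_convex_affine_minorant:
  fixes f :: "'a::metric_space \<Rightarrow> real"
  assumes "boundedly_compact TYPE('a)" "uniquely_geodesic TYPE('a)" "geod_convex f" "lsc f"
  obtains L where "L \<ge> 0" "\<And>y. f x - L * (1 + dist x y) \<le> f y"
proof -
  obtain x\<^sub>1 where x\<^sub>1: "\<And>y. y \<in> cball x 1 \<Longrightarrow> f x\<^sub>1 \<le> f y"
    using lsc_attains_min[OF assms(4), of "cball x 1"] assms(1)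
    unfolding boundedly_compact_def by force
  define L where "L = f x - f x\<^sub>1"
  have "L \<ge> 0"
    using x\<^sub>1[of x] by (simp add: L_def)
  moreover have "f x - L * (1 + dist x y) \<le> f y" for y
  proof (cases "dist x y \<le> 1")
    case True
    have "0 \<le> L * dist x y"
      using \<open>L \<ge> 0\<close> by simp
    then show ?thesis
      using x\<^sub>1[of y] True by (simp add: L_def algebra_simps)
  next
    case False
    define d where "d = dist x y"
    have d: "d > 1" "1 / d \<in> {0..1}"
      using False by (auto simp: d_def divide_le_eq)
    have "f x\<^sub>1 \<le> f (geod x y (1 / d))"
      using x\<^sub>1 dist_geod_left[OF assms(2) d(2)] d by (simp add: d_def)
    also have "\<dots> \<le> (1 - 1 / d) * f x + 1 / d * f y"
      using assms(3) d(2) unfolding geod_convex_def by blast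
    finally have "f x - L * d \<le> f y"
      using d by (simp add: L_def field_simps)
    then show ?thesis
      using \<open>L \<ge> 0\<close> by (simp add: d_def algebra_simps)
  qed
  ultimately show ?thesis
    using that by blast
qed

lemma proximal_objective_has_minimizer:
  fixes f :: "'a::metric_space \<Rightarrow> real"
  assumes "boundedly_compact TYPE('a)" "uniquely_geodesic TYPE('a)" "geod_convex f" "lsc f"
    and "p > 1" "k > 0"
  shows "\<exists>u. \<forall>z. f u + k * dist u x powr p \<le> f z + k * dist z x powr p"
proof -
  define g where "g z = f z + k * dist z x powr p" for z
  obtain L where L: "\<And>y. f x - L * (1 + dist x y) \<le> f y"
    using geod_convex_affine_minorant[OF assms(1-4)] by blast
  have "\<forall>\<^sub>F d in at_top. L * (1 + d) < k * d powr p"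
    using assms(5,6) by real_asymp
  then obtain R where R: "\<And>d. d \<ge> R \<Longrightarrow> L * (1 + d) < k * d powr p"
    by (auto simp: eventually_at_top_linorder)
  have "continuous_on UNIV (\<lambda>z. k * dist z x powr p)"
    using assms(5) by (auto intro!: continuous_intros continuous_on_powr')
  then have "lsc g"
    unfolding g_def by (rule lsc_add_continuous[OF assms(4)])
  then obtain u where u: "\<And>z. z \<in> cball x \<bar>R\<bar> \<Longrightarrow> g u \<le> g z"
    using lsc_attains_min[of g "cball x \<bar>R\<bar>"] assms(1)
    unfolding boundedly_compact_def by force
  have "g u \<le> g z" for z
  proof (cases "z \<in> cball x \<bar>R\<bar>")
    case False
    then have "L * (1 + dist x z) < k * dist x z powr p"
      using R by simp
    then have "g x < g z"
      using L[of z] by (simp add: g_def dist_commute)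
    then show ?thesis
      using u[of x] by simp
  qed (use u in blast)
  then show ?thesis
    unfolding g_def by blast
qed

lemma prox_minimizes:
  fixes f :: "'a::metric_space \<Rightarrow> real"
  assumes "boundedly_compact TYPE('a)" "uniquely_geodesic TYPE('a)" "geod_convex f" "lsc f"
    and "p > 1" "lam > 0"
  defines "k \<equiv> 1 / (p * lam powr (p - 1))"
  shows "f (prox p f lam x) + k * dist (prox p f lam x) x powr p \<le> f z + k * dist z x powr p"
proof -
  have "k > 0"
    using assms(5,6) by (simp add: k_def)
  from someI_ex[OF proximal_objective_has_minimizer[OF assms(1-5) this]]
  show ?thesis
    unfolding prox_def k_def by blast
qed

lemma argmin_subset_fixed_points_prox:
  fixes f :: "'a::metric_space \<Rightarrow> real"
  assumes "boundedly_compact TYPE('a)" "uniquely_geodesic TYPE('a)" "geod_convex f" "lsc f"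
    and "p > 1" "lam > 0"
  shows "argmin_set f \<subseteq> {x. prox p f lam x = x}"
proof
  fix x assume "x \<in> argmin_set f"
  then have "f x \<le> f (prox p f lam x)"
    by (simp add: argmin_set_def)
  moreover have "f (prox p f lam x) + 1 / (p * lam powr (p - 1)) * dist (prox p f lam x) x powr p \<le> f x"
    using prox_minimizes[OF assms, of x x] by simp
  ultimately have "1 / (p * lam powr (p - 1)) * dist (prox p f lam x) x powr p \<le> 0"
    by linarith
  moreover have "1 / (p * lam powr (p - 1)) > 0"
    using assms(5,6) by simp
  ultimately have "dist (prox p f lam x) x powr p \<le> 0"
    by (simp add: divide_le_0_iff)
  then show "x \<in> {x. prox p f lam x = x}"
    by simp
qed

lemma proximal_minimizer_strong_ineq:
  fixes f :: "'a::metric_space \<Rightarrow> real"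
  assumes "p_uniformly_convex TYPE('a) p c" "geod_convex f" "k > 0"
    and min: "\<And>z. f u + k * dist u x powr p \<le> f z + k * dist z x powr p"
  shows "f u + k * dist x u powr p + k * c / 2 * dist u v powr p \<le> f v + k * dist x v powr p"
proof -
  define A where "A = f u + k * dist x u powr p - f v - k * dist x v powr p"
  define B where "B = k * c / 2 * dist u v powr p"
  have "A + (1 - \<tau>) * B \<le> 0" if "0 < \<tau>" "\<tau> < 1" for \<tau>
  proof -
    define w where "w = geod u v \<tau>"
    have \<tau>: "\<tau> \<in> {0..1}"
      using that by simp
    have "f u + k * dist u x powr p \<le> f w + k * dist w x powr p"
      by (rule min)
    moreover have "f w \<le> (1 - \<tau>) * f u + \<tau> * f v"
      using assms(2) \<tau> unfolding geod_convex_def w_def by blast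
    moreover have "k * dist x w powr p \<le> k * ((1 - \<tau>) * dist x u powr p + \<tau> * dist x v powr p
        - c / 2 * \<tau> * (1 - \<tau>) * dist u v powr p)"
      using assms(1,3) \<tau> unfolding p_uniformly_convex_def w_def by simp
    ultimately have "\<tau> * (A + (1 - \<tau>) * B) \<le> 0"
      unfolding A_def B_def by (simp add: dist_commute algebra_simps)
    then show ?thesis
      using that by (simp add: mult_le_0_iff)
  qed
  then have "\<forall>\<^sub>F \<tau> in at_right 0. A + (1 - \<tau>) * B \<le> 0"
    by (intro eventually_at_rightI[of 0 1]) auto
  moreover have "((\<lambda>\<tau>. A + (1 - \<tau>) * B) \<longlongrightarrow> A + B) (at_right 0)"
    by (auto intro!: tendsto_eq_intros)
  ultimately have "A + B \<le> 0"
    using tendsto_upperbound by fastforce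
  then show ?thesis
    by (simp add: A_def B_def)
qed

lemma prox_Delta_lower_bound:
  fixes f :: "'a::metric_space \<Rightarrow> real"
  assumes "boundedly_compact TYPE('a)" "p_uniformly_convex TYPE('a) p c" "geod_convex f" "lsc f"
    and "p > 1" "c \<ge> 0" "lam > 0"
  shows "c\<^sup>2 / 4 * dist (prox p f lam x) (prox p f lam y) powr p
    \<le> Delta p c x y (prox p f lam x) (prox p f lam y)"
proof -
  define k where "k = 1 / (p * lam powr (p - 1))"
  define u where "u = prox p f lam x"
  define v where "v = prox p f lam y"
  have "k > 0"
    using assms(5,7) by (simp add: k_def)
  have ug: "uniquely_geodesic TYPE('a)"
    using assms(2) unfolding p_uniformly_convex_def by blast
  have "f u + k * dist x u powr p + k * c / 2 * dist u v powr p \<le> f v + k * dist x v powr p"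
    using proximal_minimizer_strong_ineq[OF assms(2,3) \<open>k > 0\<close>]
      prox_minimizes[OF assms(1) ug assms(3-5,7)] by (simp add: u_def k_def)
  moreover have "f v + k * dist y v powr p + k * c / 2 * dist v u powr p \<le> f u + k * dist y u powr p"
    using proximal_minimizer_strong_ineq[OF assms(2,3) \<open>k > 0\<close>]
      prox_minimizes[OF assms(1) ug assms(3-5,7)] by (simp add: v_def k_def)
  ultimately have "k * (c * dist u v powr p)
      \<le> k * (dist x v powr p + dist y u powr p - dist x u powr p - dist y v powr p)"
    by (simp add: dist_commute algebra_simps)
  then have "c * dist u v powr p \<le> dist x v powr p + dist y u powr p - dist x u powr p - dist y v powr p"
    using \<open>k > 0\<close> by simp
  then have "c / 4 * (c * dist u v powr p)
      \<le> c / 4 * (dist x v powr p + dist y u powr p - dist x u powr p - dist y v powr p)"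
    using assms(6) by (intro mult_left_mono) auto
  then show ?thesis
    unfolding Delta_def u_def v_def by (simp add: power2_eq_square)
qed

lemma a_fne_constants:
  fixes c :: real
  assumes "1 < c" "c \<le> 2"
  defines "\<alpha> \<equiv> c * (c - 1) / (2 + c * (c - 1))"
  shows "0 < \<alpha>" "\<alpha> < 1" "(1 - \<alpha>) / \<alpha> = 2 / (c * (c - 1))"
    and "0 \<le> (2 - c) / (c - 1)" "1 + (2 - c) / (c - 1) = 1 / (c - 1)"
proof -
  define q where "q = c * (c - 1)"
  have "q > 0" "2 + q > 0"
    using assms(1) by (simp_all add: q_def add_pos_pos)
  moreover have "1 - q / (2 + q) = 2 / (2 + q)"
    using \<open>2 + q > 0\<close> by (simp add: field_simps)
  ultimately show "0 < \<alpha>" "\<alpha> < 1" "(1 - \<alpha>) / \<alpha> = 2 / (c * (c - 1))"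
    unfolding \<alpha>_def q_def[symmetric] by (simp_all add: divide_simps)
  show "0 \<le> (2 - c) / (c - 1)" "1 + (2 - c) / (c - 1) = 1 / (c - 1)"
    using assms(1,2) by (simp_all add: field_simps)
qed

lemma a_fne_if_Delta_lower_bound:
  assumes "1 < c" "c \<le> 2"
    and Delta_bound: "\<And>x y. c\<^sup>2 / 4 * dist (T x) (T y) powr p \<le> Delta p c x y (T x) (T y)"
  shows "a_fne p c T (c * (c - 1) / (2 + c * (c - 1))) ((2 - c) / (c - 1))"
proof -
  have "dist (T x) (T y) powr p
      \<le> 1 / (c - 1) * dist x y powr p - 2 / (c * (c - 1)) * Psi p c x y (T x) (T y)" for x y
  proof -
    define D a b e g h where "D = dist (T x) (T y) powr p" and "a = dist x (T x) powr p"
      and "b = dist y (T y) powr p" and "e = dist x y powr p"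
      and "g = dist y (T x) powr p" and "h = dist x (T y) powr p"
    have "c / 4 * (c * D) \<le> c / 4 * (h + g - a - b)"
      using Delta_bound[of x y] by (simp add: Delta_def D_def a_def b_def g_def h_def power2_eq_square)
    then have "c * D \<le> h + g - a - b"
      using assms(1) by (simp add: mult_le_cancel_left_pos)
    then have "(c - 1) * D \<le> e - (a + b + D + e - g - h)"
      by (simp add: algebra_simps)
    then have "D \<le> (e - (a + b + D + e - g - h)) / (c - 1)"
      using assms(1) by (simp add: pos_le_divide_eq mult.commute)
    then have "D \<le> 1 / (c - 1) * e - (a + b + D + e - g - h) / (c - 1)"
      by (simp add: diff_divide_distrib add_divide_distrib)
    moreover have "2 / (c * (c - 1)) * Psi p c x y (T x) (T y) = (a + b + D + e - g - h) / (c - 1)"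
      unfolding Psi_def D_def a_def b_def e_def g_def h_def using assms(1) by (simp add: field_simps)
    ultimately show ?thesis
      unfolding D_def e_def by simp
  qed
  then show ?thesis
    unfolding a_fne_def a_fne_constants(3,5)[OF assms(1,2)]
    using a_fne_constants(1,2,4)[OF assms(1,2)] by blast
qed

theorem mainTheorem11:
  fixes f :: "'a::metric_space \<Rightarrow> real" and p c lam :: real
  assumes "boundedly_compact TYPE('a)"
    and "p > 1" and "c > 0"
    and "p_uniformly_convex TYPE('a) p c"
    and "geod_convex f" and "lsc f"
    and "lam > 0"
  shows "argmin_set f \<subseteq> {x. prox p f lam x = x}
    \<and> (\<forall>x y. Delta p c x y (prox p f lam x) (prox p f lam y) \<ge> c^2 / 4 * dist (prox p f lam x) (prox p f lam y) powr p)
    \<and> (3/2 < c \<and> c \<le> 2 \<longrightarrow> a_fne p c (prox p f lam) (c * (c - 1) / (2 + c * (c - 1))) ((2 - c) / (c - 1)))"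
proof -
  have "uniquely_geodesic TYPE('a)"
    using assms(4) unfolding p_uniformly_convex_def by blast
  then have "argmin_set f \<subseteq> {x. prox p f lam x = x}"
    using argmin_subset_fixed_points_prox assms(1,2,5-7) by blast
  moreover have Delta_bound: "c\<^sup>2 / 4 * dist (prox p f lam x) (prox p f lam y) powr p
      \<le> Delta p c x y (prox p f lam x) (prox p f lam y)" for x y
    using prox_Delta_lower_bound[OF assms(1,4-6,2) less_imp_le[OF assms(3)] assms(7)] .
  moreover have "a_fne p c (prox p f lam) (c * (c - 1) / (2 + c * (c - 1))) ((2 - c) / (c - 1))"
    if "3/2 < c" "c \<le> 2"
    using that by (intro a_fne_if_Delta_lower_bound Delta_bound) simp_all
  ultimately show ?thesis
    by blast
qed

end
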